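(* Let $A$ be a wqo such that $\mathbf{w}(A)\ge\omega$ is additively indecomposable. Then $A$ has a substructure $C$ with $\mathbf{w}(C)=\mathbf{w}(A)$ which is transferable.
   Context: A wqo is a quasi-order in which every infinite sequence $x_0,x_1,\dots$ has $i<j$ with $x_i\le x_j$. $\mathbf{w}(A)$ (width) is the rank of the root of the well-founded tree of finite sequences of pairwise incomparable elements of $A$ (root: empty sequence, children: one-element extensions; rank $r(s)=\sup\{r(t)+1: t\text{ child of } s\}$). An ordinal is additively indecomposable if it is of the form $\omega^\gamma$. A substructure is a subset with the restricted ordering. A wqo $C$ is transferable if for every finite set $\{x_1,\dots,x_n\}\subseteq C$, the substructure $\{y\in C : y\not\le x_i \text{ for all } i\}$ has width $\mathbf{w}(C)$. *)

theory Defs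
  imports Main
begin

definition wqo_on :: "('a \<Rightarrow> 'a \<Rightarrow> bool) \<Rightarrow> 'a set \<Rightarrow> bool" where
  "wqo_on le A \<longleftrightarrow>
     (\<forall>x\<in>A. le x x) \<and>
     (\<forall>x\<in>A. \<forall>y\<in>A. \<forall>z\<in>A. le x y \<longrightarrow> le y z \<longrightarrow> le x z) \<and>
     (\<forall>f :: nat \<Rightarrow> 'a. (\<forall>i. f i \<in> A) \<longrightarrow> (\<exists>i j. i < j \<and> le (f i) (f j)))"

definition incomp :: "('a \<Rightarrow> 'a \<Rightarrow> bool) \<Rightarrow> 'a \<Rightarrow> 'a \<Rightarrow> bool" where
  "incomp le x y \<longleftrightarrow> \<not> le x y \<and> \<not> le y x"

text \<open>Nodes of the tree of finite sequences of pairwise incomparable elements of B.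
  The root is [], the children of s are the one-element extensions s @ [x].\<close>
definition antichain_seqs :: "('a \<Rightarrow> 'a \<Rightarrow> bool) \<Rightarrow> 'a set \<Rightarrow> 'a list set" where
  "antichain_seqs le B =
     {xs. set xs \<subseteq> B \<and>
          (\<forall>i<length xs. \<forall>j<length xs. i \<noteq> j \<longrightarrow> incomp le (xs ! i) (xs ! j))}"

text \<open>Comparison of ranks of nodes of two trees (given by prefix-closed node sets, children
  being one-element extensions).  Since r(s) = sup {r(t)+1 : t child of s}, we have
  r(s) \<le> r(s') iff every child t of s satisfies r(t) < r(s'), i.e. iff for every child t of s
  there is a child t' of s' with r(t) \<le> r(t').  This is the defining recursion of the rank,
  unfolded; on well-founded trees the inductive relation is the rank comparison.\<close>
inductive rank_le :: "'a list set \<Rightarrow> 'b list set \<Rightarrow> 'a list \<Rightarrow> 'b list \<Rightarrow> bool"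
  for T :: "'a list set" and T' :: "'b list set" where
  "(\<forall>x. s @ [x] \<in> T \<longrightarrow> (\<exists>y. s' @ [y] \<in> T' \<and> rank_le T T' (s @ [x]) (s' @ [y])))
     \<Longrightarrow> rank_le T T' s s'"

text \<open>The width w(B) as an ordinal, i.e. a well-order (up to =o): the ranks of the non-root
  nodes are exactly the ordinals below the rank of the root, so the set of non-root nodes
  modulo equal rank, ordered by rank, has order type r([]) = w(B).\<close>
definition width_ord :: "('a \<Rightarrow> 'a \<Rightarrow> bool) \<Rightarrow> 'a set \<Rightarrow> ('a list set) rel" where
  "width_ord le B =
     (let T = antichain_seqs le B;
          P = T - {[]};
          E = {(s, t). s \<in> P \<and> t \<in> P \<and> rank_le T T s t \<and> rank_le T T t s}
      in {(X, Y). X \<in> P // E \<and> Y \<in> P // E \<and> (\<exists>s\<in>X. \<exists>t\<in>Y. rank_le T T s t)})"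

text \<open>omega_exp g is the well-order \<omega>^g (Cantor normal form representation): finitely
  supported functions from Field g to nat, compared at the g-largest point of difference.\<close>
definition omega_exp :: "'c rel \<Rightarrow> ('c \<Rightarrow> nat) rel" where
  "omega_exp g =
     (let F = {f. finite {x. f x \<noteq> 0} \<and> {x. f x \<noteq> 0} \<subseteq> Field g}
      in {(f, h). f \<in> F \<and> h \<in> F \<and>
            (f = h \<or> (\<exists>x. f x < h x \<and> (\<forall>y. f y \<noteq> h y \<longrightarrow> (y, x) \<in> g)))})"

text \<open>An ordinal (well-order) is additively indecomposable if it is of the form \<omega>^\<gamma>.
  (\<gamma> \<le> \<omega>^\<gamma>, so \<gamma> can be taken on the same carrier type.)\<close>
definition add_indecomposable :: "'b rel \<Rightarrow> bool" where
  "add_indecomposable \<alpha> \<longleftrightarrow> (\<exists>\<gamma> :: 'b rel. Well_order \<gamma> \<and> (\<alpha>, omega_exp \<gamma>) \<in> ordIso)"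

definition transferable :: "('a \<Rightarrow> 'a \<Rightarrow> bool) \<Rightarrow> 'a set \<Rightarrow> bool" where
  "transferable le C \<longleftrightarrow>
     (\<forall>F. finite F \<and> F \<subseteq> C \<longrightarrow>
        (width_ord le {y \<in> C. \<forall>x\<in>F. \<not> le y x}, width_ord le C) \<in> ordIso)"

end

theory Submission
  imports Defs "HOL-Library.Function_Algebras"
begin

text \<open>
  Write \<omega>^\<gamma> for w(A). For a wqo X, w(X) < \<omega>^\<gamma> holds iff the tree of antichain sequences of X
  admits a labelling by ordinals below \<omega>^\<gamma> that strictly decreases from each node to its
  children. Since \<omega>^\<gamma> is closed under natural sums, such labellings combine, so the subsets
  X \<subseteq> A with w(X) < \<omega>^\<gamma> form an ideal; it contains all chains (their width is at most 1)
  but not A. By the wqo property there is a minimal downward closed set C \<subseteq> A outside the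
  ideal. For x \<in> C the cone {y \<in> C. y \<le> x} lies in the ideal: either it is a proper downward
  closed subset of C, or it is all of C and C splits into the proper downward closed set
  {y \<in> C. \<not> x \<le> y} and the chain of elements equivalent to x. Hence removing finitely many
  cones from C leaves a set outside the ideal, i.e. of width \<omega>^\<gamma>.
\<close>

section \<open>Ranks in well-founded trees\<close>

lemma rank_le_iff:
  "rank_le T T' s s' \<longleftrightarrow>
     (\<forall>x. s @ [x] \<in> T \<longrightarrow> (\<exists>y. s' @ [y] \<in> T' \<and> rank_le T T' (s @ [x]) (s' @ [y])))"
  by (subst rank_le.simps) auto

lemma rank_le_trans: "rank_le T T a b \<Longrightarrow> rank_le T T b c \<Longrightarrow> rank_le T T a c"
proof (induction a b arbitrary: c rule: rank_le.induct)
  case (1 s s')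
  show ?case
  proof (subst rank_le_iff, intro allI impI)
    fix x assume "s @ [x] \<in> T"
    then obtain y where y: "s' @ [y] \<in> T"
      "\<And>c. rank_le T T (s' @ [y]) c \<Longrightarrow> rank_le T T (s @ [x]) c"
      using "1.IH" by blast
    obtain z where "c @ [z] \<in> T" "rank_le T T (s' @ [y]) (c @ [z])"
      using "1.prems" y(1) rank_le_iff by metis
    then show "\<exists>z. c @ [z] \<in> T \<and> rank_le T T (s @ [x]) (c @ [z])" using y(2) by blast
  qed
qed

locale wf_tree =
  fixes T :: "'a list set"
  assumes prefix_closed: "\<And>s a. s @ [a] \<in> T \<Longrightarrow> s \<in> T"
    and wf_child: "wf {(s @ [a], s) | s a. s @ [a] \<in> T}"
begin

abbreviation rle :: "'a list \<Rightarrow> 'a list \<Rightarrow> bool" where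
  "rle \<equiv> rank_le T T"

lemma child_induct:
  assumes "\<And>s. (\<And>a. s @ [a] \<in> T \<Longrightarrow> P (s @ [a])) \<Longrightarrow> P s"
  shows "P s"
  using wf_child by (induction s rule: wf_induct_rule) (use assms in blast)

lemma rle_refl: "rle s s"
proof (induction s rule: child_induct)
  case (1 s)
  then show ?case by (subst rank_le_iff) blast
qed

lemma rle_child: "s @ [x] \<in> T \<Longrightarrow> rle (s @ [x]) s"
proof (induction s arbitrary: x rule: child_induct)
  case (1 s)
  show ?case
  proof (subst rank_le_iff, intro allI impI)
    fix z assume "(s @ [x]) @ [z] \<in> T"
    then have "rle ((s @ [x]) @ [z]) (s @ [x])" using "1.IH"[of x z] "1.prems" by simp
    then show "\<exists>y. s @ [y] \<in> T \<and> rle ((s @ [x]) @ [z]) (s @ [y])"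
      using "1.prems" by auto
  qed
qed

lemma not_rle_child: "s @ [x] \<in> T \<Longrightarrow> \<not> rle s (s @ [x])"
proof (induction s arbitrary: x rule: child_induct)
  case (1 s)
  show ?case
  proof
    assume "rle s (s @ [x])"
    then obtain w where "s @ [x] @ [w] \<in> T" "rle (s @ [x]) (s @ [x] @ [w])"
      using "1.prems" rank_le_iff by (metis append_assoc)
    then show False using "1.IH"[of x w] "1.prems" by simp
  qed
qed

lemma rle_total: "rle s t \<or> rle t s"
proof (induction s arbitrary: t rule: child_induct)
  case (1 s)
  show ?case
  proof (rule disjCI)
    assume "\<not> rle t s"
    then obtain y where y: "t @ [y] \<in> T" "\<forall>x. s @ [x] \<in> T \<longrightarrow> \<not> rle (t @ [y]) (s @ [x])"
      using rank_le_iff by metis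
    show "rle s t"
    proof (subst rank_le_iff, intro allI impI)
      fix x assume "s @ [x] \<in> T"
      then show "\<exists>y. t @ [y] \<in> T \<and> rle (s @ [x]) (t @ [y])" using y "1" by blast
    qed
  qed
qed

lemma rle_if_no_child_above: "(\<And>w. a @ [w] \<in> T \<Longrightarrow> \<not> rle c (a @ [w])) \<Longrightarrow> rle a c"
proof (induction a arbitrary: c rule: child_induct)
  case (1 a)
  show ?case
  proof (subst rank_le_iff, intro allI impI)
    fix w assume w: "a @ [w] \<in> T"
    then obtain v where v: "c @ [v] \<in> T"
      "\<And>u. a @ [w] @ [u] \<in> T \<Longrightarrow> \<not> rle (c @ [v]) (a @ [w] @ [u])"
      using "1.prems" rank_le_iff[of T T c "a @ [w]"] by auto
    have "rle (a @ [w]) (c @ [v])" using "1.IH"[OF w] v(2) by (metis append_assoc)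
    then show "\<exists>y. c @ [y] \<in> T \<and> rle (a @ [w]) (c @ [y])" using v(1) by blast
  qed
qed

lemma rle_child_if_not_rle: "\<not> rle c a \<Longrightarrow> \<exists>v. c @ [v] \<in> T \<and> rle a (c @ [v])"
proof -
  assume "\<not> rle c a"
  then obtain v where "c @ [v] \<in> T" "\<forall>w. a @ [w] \<in> T \<longrightarrow> \<not> rle (c @ [v]) (a @ [w])"
    using rank_le_iff[of T T c a] by auto
  then show ?thesis using rle_if_no_child_above[of a "c @ [v]"] by blast
qed

lemma wf_not_rle: "wf {(t, s). \<not> rle s t}"
proof -
  let ?R = "{(t, s). \<not> rle s t}"
  have "\<forall>t. rle t s \<longrightarrow> t \<in> Wellfounded.acc ?R" for s
  proof (induction s rule: child_induct)
    case (1 s)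
    show ?case
    proof (intro allI impI)
      fix t assume "rle t s"
      show "t \<in> Wellfounded.acc ?R"
      proof (rule accI)
        fix u assume "(u, t) \<in> ?R"
        then have "\<not> rle s u" using \<open>rle t s\<close> rank_le_trans by blast
        then obtain v where "s @ [v] \<in> T" "rle u (s @ [v])" using rle_child_if_not_rle by blast
        then show "u \<in> Wellfounded.acc ?R" using "1" by blast
      qed
    qed
  qed
  then show ?thesis using rle_refl by (blast intro: acc_wfI)
qed

lemma prefix_closed_append: "u @ v \<in> T \<Longrightarrow> u \<in> T"
proof (induction v rule: rev_induct)
  case (snoc a v)
  then show ?case using prefix_closed[of "u @ v" a] by simp
qed simp

lemma rle_append: "u @ v \<in> T \<Longrightarrow> rle (u @ v) u"
proof (induction v rule: rev_induct)
  case Nil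
  then show ?case by (simp add: rle_refl)
next
  case (snoc a v)
  then show ?case using prefix_closed rle_child rank_le_trans by (metis append_assoc)
qed

lemma not_rle_root: "t \<in> T \<Longrightarrow> t \<noteq> [] \<Longrightarrow> \<not> rle [] t"
proof
  assume t: "t \<in> T" "t \<noteq> []" "rle [] t"
  then obtain a v where "t = [a] @ v" by (cases t) auto
  then have "[a] \<in> T" "rle t [a]" using t(1) prefix_closed_append rle_append by blast+
  then have "rle [] [a]" using t(3) rank_le_trans by blast
  then show False using not_rle_child[of "[]" a] \<open>[a] \<in> T\<close> by simp
qed

end

definition rank_order :: "'a list set \<Rightarrow> ('a list set) rel" where
  "rank_order T =
     (let P = T - {[]};
          E = {(s, t). s \<in> P \<and> t \<in> P \<and> rank_le T T s t \<and> rank_le T T t s}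
      in {(X, Y). X \<in> P // E \<and> Y \<in> P // E \<and> (\<exists>s\<in>X. \<exists>t\<in>Y. rank_le T T s t)})"

lemma width_ord_eq_rank_order: "width_ord le B = rank_order (antichain_seqs le B)"
  by (simp add: width_ord_def rank_order_def Let_def)

context wf_tree
begin

definition nonroot :: "'a list set" where
  "nonroot = T - {[]}"

definition same_rank :: "'a list rel" where
  "same_rank = {(s, t). s \<in> nonroot \<and> t \<in> nonroot \<and> rle s t \<and> rle t s}"

definition rank_class :: "'a list \<Rightarrow> 'a list set" where
  "rank_class s = same_rank `` {s}"

lemma rank_order_iff:
  "(X, Y) \<in> rank_order T \<longleftrightarrow>
     X \<in> nonroot // same_rank \<and> Y \<in> nonroot // same_rank \<and> (\<exists>s\<in>X. \<exists>t\<in>Y. rle s t)"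
  by (simp add: rank_order_def nonroot_def same_rank_def Let_def)

lemma mem_rank_class: "t \<in> rank_class s \<longleftrightarrow> s \<in> nonroot \<and> t \<in> nonroot \<and> rle s t \<and> rle t s"
  by (auto simp: rank_class_def same_rank_def)

lemma rank_class_in_quotient: "s \<in> nonroot \<Longrightarrow> rank_class s \<in> nonroot // same_rank"
  unfolding rank_class_def by (rule quotientI)

lemma quotient_rank_classE:
  assumes "X \<in> nonroot // same_rank"
  obtains s where "s \<in> nonroot" "X = rank_class s"
  using assms unfolding rank_class_def by (auto elim: quotientE)

lemma rank_class_self: "s \<in> nonroot \<Longrightarrow> s \<in> rank_class s"
  using mem_rank_class rle_refl by blast

lemma rank_class_eq_iff:
  assumes "s \<in> nonroot" "t \<in> nonroot"
  shows "rank_class s = rank_class t \<longleftrightarrow> rle s t \<and> rle t s"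
proof
  assume "rank_class s = rank_class t"
  then show "rle s t \<and> rle t s" using assms rank_class_self mem_rank_class by blast
next
  assume "rle s t \<and> rle t s"
  then show "rank_class s = rank_class t" using assms mem_rank_class rank_le_trans by blast
qed

lemma rank_class_eq: "t \<in> rank_class s \<Longrightarrow> rank_class t = rank_class s"
  using rank_class_eq_iff mem_rank_class by blast

lemma rank_class_rank_order_iff:
  assumes "s \<in> nonroot" "t \<in> nonroot"
  shows "(rank_class s, rank_class t) \<in> rank_order T \<longleftrightarrow> rle s t"
proof
  assume "(rank_class s, rank_class t) \<in> rank_order T"
  then obtain s' t' where "s' \<in> rank_class s" "t' \<in> rank_class t" "rle s' t'"
    using rank_order_iff by blast
  then show "rle s t" using mem_rank_class rank_le_trans by metis
next
  assume "rle s t"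
  then show "(rank_class s, rank_class t) \<in> rank_order T"
    using assms rank_order_iff rank_class_in_quotient rank_class_self by blast
qed

lemma rank_order_refl: "X \<in> nonroot // same_rank \<Longrightarrow> (X, X) \<in> rank_order T"
  by (metis quotient_rank_classE rank_class_rank_order_iff rle_refl)

lemma Field_rank_order: "Field (rank_order T) = nonroot // same_rank"
proof
  show "Field (rank_order T) \<subseteq> nonroot // same_rank"
    unfolding Field_def using rank_order_iff by blast
  show "nonroot // same_rank \<subseteq> Field (rank_order T)"
    using rank_order_refl by (auto intro: FieldI1)
qed

lemma Linear_order_rank_order: "Linear_order (rank_order T)"
  unfolding linear_order_on_def partial_order_on_def preorder_on_def
proof (intro conjI)
  show "rank_order T \<subseteq> Field (rank_order T) \<times> Field (rank_order T)"
    by (auto intro: FieldI1 FieldI2)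
  show "refl_on (Field (rank_order T)) (rank_order T)"
    unfolding refl_on_def Field_rank_order using rank_order_refl by blast
  show "trans (rank_order T)"
  proof (rule transI)
    fix X Y Z assume XYZ: "(X, Y) \<in> rank_order T" "(Y, Z) \<in> rank_order T"
    then obtain s t u where "s \<in> nonroot" "t \<in> nonroot" "u \<in> nonroot"
      "X = rank_class s" "Y = rank_class t" "Z = rank_class u"
      using rank_order_iff quotient_rank_classE by metis
    then show "(X, Z) \<in> rank_order T" using XYZ rank_class_rank_order_iff rank_le_trans by metis
  qed
  show "antisym (rank_order T)"
  proof (rule antisymI)
    fix X Y assume XY: "(X, Y) \<in> rank_order T" "(Y, X) \<in> rank_order T"
    then obtain s t where "s \<in> nonroot" "t \<in> nonroot" "X = rank_class s" "Y = rank_class t"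
      using rank_order_iff quotient_rank_classE by metis
    then show "X = Y" using XY rank_class_rank_order_iff rank_class_eq_iff by metis
  qed
  show "total_on (Field (rank_order T)) (rank_order T)"
  proof (rule total_onI)
    fix X Y assume "X \<in> Field (rank_order T)" "Y \<in> Field (rank_order T)"
    then obtain s t where "s \<in> nonroot" "t \<in> nonroot" "X = rank_class s" "Y = rank_class t"
      unfolding Field_rank_order by (metis quotient_rank_classE)
    then show "(X, Y) \<in> rank_order T \<or> (Y, X) \<in> rank_order T"
      using rank_class_rank_order_iff rle_total by blast
  qed
qed

lemma Well_order_rank_order: "Well_order (rank_order T)"
proof -
  define rep where "rep X = (SOME s. s \<in> nonroot \<and> X = rank_class s)" for X
  have rep: "rep X \<in> nonroot \<and> X = rank_class (rep X)" if "X \<in> nonroot // same_rank" for X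
    using that unfolding rep_def by (metis (mono_tags, lifting) quotient_rank_classE someI)
  have "rank_order T - Id \<subseteq> inv_image {(t, s). \<not> rle s t} rep"
  proof (rule subsetI)
    fix p assume "p \<in> rank_order T - Id"
    then obtain X Y where XY: "p = (X, Y)" "(X, Y) \<in> rank_order T" "X \<noteq> Y" by (cases p) auto
    then have "rep X \<in> nonroot" "X = rank_class (rep X)" "rep Y \<in> nonroot" "Y = rank_class (rep Y)"
      using rep rank_order_iff by blast+
    then have "\<not> rle (rep Y) (rep X)"
      using XY rank_class_rank_order_iff rank_class_eq_iff by metis
    then show "p \<in> inv_image {(t, s). \<not> rle s t} rep" using XY(1) by simp
  qed
  then have "wf (rank_order T - Id)"
    using wf_subset wf_inv_image wf_not_rle by blast
  then show ?thesis
    using Linear_order_rank_order unfolding well_order_on_def by blast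
qed

end

section \<open>Decreasing labellings\<close>

definition decreasing_labelling :: "'w rel \<Rightarrow> 'a list set \<Rightarrow> ('a list \<Rightarrow> 'w) \<Rightarrow> bool" where
  "decreasing_labelling W T \<phi> \<longleftrightarrow> (\<forall>s\<in>T. \<phi> s \<in> Field W) \<and>
     (\<forall>s a. s @ [a] \<in> T \<longrightarrow> (\<phi> (s @ [a]), \<phi> s) \<in> W \<and> \<phi> (s @ [a]) \<noteq> \<phi> s)"

lemma decreasing_labelling_subset:
  "decreasing_labelling W T' \<phi> \<Longrightarrow> T \<subseteq> T' \<Longrightarrow> decreasing_labelling W T \<phi>"
  unfolding decreasing_labelling_def by blast

lemma embedS_strict_upper_bound:
  assumes "Well_order r" "Well_order r'" "embedS r r' f"
  obtains w where "w \<in> Field r'" "\<And>v. v \<in> f ` Field r \<Longrightarrow> (v, w) \<in> r' \<and> v \<noteq> w"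
proof -
  have emb: "embed r r' f" and not_bij: "\<not> bij_betw f (Field r) (Field r')"
    using assms(3) unfolding embedS_def by blast+
  have img: "f ` Field r \<subseteq> Field r'" using embed_Field[OF emb] .
  then obtain w where w: "w \<in> Field r'" "w \<notin> f ` Field r"
    using not_bij embed_inj_on[OF assms(1) emb] unfolding bij_betw_def by blast
  have ofilter: "ofilter r' (f ` Field r)" using embed_Field_ofilter[OF assms(1,2) emb] .
  have "(v, w) \<in> r' \<and> v \<noteq> w" if v: "v \<in> f ` Field r" for v
  proof -
    have "(w, v) \<notin> r'" using ofilter v w unfolding ofilter_def under_def by blast
    moreover have "total_on (Field r') r'"
      using assms(2) unfolding well_order_on_def linear_order_on_def by blast
    ultimately show ?thesis using v w img unfolding total_on_def by blast
  qed
  then show thesis using that w(1) by blast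
qed

context wf_tree
begin

lemma labelling_if_rank_order_less:
  assumes "(rank_order T, W) \<in> ordLess"
  shows "\<exists>\<phi>. decreasing_labelling W T \<phi>"
proof -
  obtain f where f: "embedS (rank_order T) W f" and W: "Well_order W"
    using assms unfolding ordLess_def by blast
  then have emb: "embed (rank_order T) W f" unfolding embedS_def by blast
  obtain w where w: "w \<in> Field W"
    and above: "\<And>v. v \<in> f ` Field (rank_order T) \<Longrightarrow> (v, w) \<in> W \<and> v \<noteq> w"
    using embedS_strict_upper_bound[OF Well_order_rank_order W f] by blast
  have in_image: "f (rank_class s) \<in> f ` Field (rank_order T)" if "s \<in> nonroot" for s
    using that rank_class_in_quotient Field_rank_order by blast
  define \<phi> where "\<phi> s = (if s = [] then w else f (rank_class s))" for s
  have "decreasing_labelling W T \<phi>"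
    unfolding decreasing_labelling_def
  proof (rule conjI; intro allI impI ballI)
    fix s assume "s \<in> T"
    then show "\<phi> s \<in> Field W"
      using w in_image embed_Field[OF emb] unfolding \<phi>_def nonroot_def by auto
  next
    fix s a assume sa: "s @ [a] \<in> T"
    then have child: "s @ [a] \<in> nonroot" unfolding nonroot_def by simp
    show "(\<phi> (s @ [a]), \<phi> s) \<in> W \<and> \<phi> (s @ [a]) \<noteq> \<phi> s"
    proof (cases "s = []")
      case True
      then show ?thesis using above[OF in_image[OF child]] unfolding \<phi>_def by simp
    next
      case False
      then have parent: "s \<in> nonroot" using prefix_closed sa unfolding nonroot_def by blast
      have "(rank_class (s @ [a]), rank_class s) \<in> rank_order T"
        using rank_class_rank_order_iff child parent rle_child sa by blast
      then have "(f (rank_class (s @ [a])), f (rank_class s)) \<in> W"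
        using embed_compat[OF emb] unfolding compat_def by blast
      moreover have "rank_class (s @ [a]) \<noteq> rank_class s"
        using rank_class_eq_iff child parent not_rle_child sa by blast
      then have "f (rank_class (s @ [a])) \<noteq> f (rank_class s)"
        using embed_inj_on[OF Well_order_rank_order emb] child parent rank_class_in_quotient
        unfolding Field_rank_order inj_on_def by metis
      ultimately show ?thesis unfolding \<phi>_def using False by simp
    qed
  qed
  then show ?thesis by blast
qed

lemma rle_embedded_label:
  assumes lab: "decreasing_labelling W T \<phi>" and W: "Well_order W"
    and emb: "embed W (rank_order T) g"
  shows "s \<in> T \<Longrightarrow> t \<in> g (\<phi> s) \<Longrightarrow> rle s t"
proof (induction s arbitrary: t rule: child_induct)
  case (1 s)
  have inj: "inj_on g (Field W)" using embed_inj_on[OF W emb] .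
  have img: "g ` Field W \<subseteq> nonroot // same_rank"
    using embed_Field[OF emb] Field_rank_order by simp
  have label_s: "\<phi> s \<in> Field W" using lab "1.prems"(1) unfolding decreasing_labelling_def by blast
  then obtain s0 where "s0 \<in> nonroot" "g (\<phi> s) = rank_class s0"
    using img quotient_rank_classE by blast
  then have t: "g (\<phi> s) = rank_class t" "t \<in> nonroot"
    using "1.prems"(2) rank_class_eq mem_rank_class by auto
  show ?case
  proof (subst rank_le_iff, intro allI impI)
    fix x assume sx: "s @ [x] \<in> T"
    have label_sx: "\<phi> (s @ [x]) \<in> Field W" "(\<phi> (s @ [x]), \<phi> s) \<in> W" "\<phi> (s @ [x]) \<noteq> \<phi> s"
      using lab sx unfolding decreasing_labelling_def by auto
    obtain t' where t': "t' \<in> nonroot" "g (\<phi> (s @ [x])) = rank_class t'"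
      using img label_sx(1) quotient_rank_classE by blast
    have "(rank_class t', rank_class t) \<in> rank_order T"
      using embed_compat[OF emb] label_sx(2) t' t unfolding compat_def by metis
    moreover have "rank_class t' \<noteq> rank_class t"
      using inj label_s label_sx t t' unfolding inj_on_def by metis
    ultimately have "\<not> rle t t'"
      using rank_class_rank_order_iff rank_class_eq_iff t'(1) t(2) by blast
    moreover have "rle (s @ [x]) t'" using "1.IH"[OF sx sx] t' rank_class_self by metis
    ultimately have "\<not> rle t (s @ [x])" using rank_le_trans by blast
    then show "\<exists>y. t @ [y] \<in> T \<and> rle (s @ [x]) (t @ [y])" using rle_child_if_not_rle by blast
  qed
qed

lemma rank_order_less_if_labelling:
  assumes root: "[] \<in> T" and lab: "decreasing_labelling W T \<phi>" and W: "Well_order W"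
  shows "(rank_order T, W) \<in> ordLess"
proof -
  have "(W, rank_order T) \<notin> ordLeq"
  proof
    assume "(W, rank_order T) \<in> ordLeq"
    then obtain g where emb: "embed W (rank_order T) g" unfolding ordLeq_def by blast
    have "\<phi> [] \<in> Field W" using lab root unfolding decreasing_labelling_def by blast
    then have "g (\<phi> []) \<in> nonroot // same_rank" using embed_Field[OF emb] Field_rank_order by blast
    then obtain t where "t \<in> nonroot" "g (\<phi> []) = rank_class t" by (rule quotient_rank_classE)
    then have "t \<in> nonroot" "rle [] t"
      using rle_embedded_label[OF lab W emb root] rank_class_self by auto
    then show False using not_rle_root unfolding nonroot_def by blast
  qed
  then show ?thesis using not_ordLeq_iff_ordLess[OF Well_order_rank_order W] by blast
qed

lemma rank_order_less_iff:
  assumes "[] \<in> T" "Well_order W"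
  shows "(rank_order T, W) \<in> ordLess \<longleftrightarrow> (\<exists>\<phi>. decreasing_labelling W T \<phi>)"
  using assms labelling_if_rank_order_less rank_order_less_if_labelling by blast

end

section \<open>Width of a wqo\<close>

lemma antichain_seqs_iff:
  "xs \<in> antichain_seqs le B \<longleftrightarrow> set xs \<subseteq> B \<and> sorted_wrt (incomp le) xs"
proof -
  have "(\<forall>i<length xs. \<forall>j<length xs. i \<noteq> j \<longrightarrow> incomp le (xs ! i) (xs ! j)) \<longleftrightarrow>
        sorted_wrt (incomp le) xs"
    unfolding sorted_wrt_iff_nth_less by (metis incomp_def linorder_neq_iff order_less_trans)
  then show ?thesis unfolding antichain_seqs_def by blast
qed

lemma Nil_in_antichain_seqs: "[] \<in> antichain_seqs le B"
  by (simp add: antichain_seqs_iff)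

lemma antichain_seqs_prefix: "s @ [a] \<in> antichain_seqs le B \<Longrightarrow> s \<in> antichain_seqs le B"
  by (simp add: antichain_seqs_iff sorted_wrt_append)

lemma antichain_seqs_mono: "X \<subseteq> Y \<Longrightarrow> antichain_seqs le X \<subseteq> antichain_seqs le Y"
  unfolding antichain_seqs_def by blast

lemma wqo_on_subset: "wqo_on le A \<Longrightarrow> X \<subseteq> A \<Longrightarrow> wqo_on le X"
  unfolding wqo_on_def by (meson subsetD)

text \<open>An infinite branch of the tree of antichain sequences is a bad sequence.\<close>

lemma wf_tree_antichain_seqs:
  assumes "wqo_on le X"
  shows "wf_tree (antichain_seqs le X)"
proof
  let ?T = "antichain_seqs le X"
  show "s \<in> ?T" if "s @ [a] \<in> ?T" for s a
    using that by (rule antichain_seqs_prefix)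
  show "wf {(s @ [a], s) |s a. s @ [a] \<in> ?T}"
  proof (rule ccontr)
    assume "\<not> ?thesis"
    then obtain f where f: "\<And>i. (f (Suc i), f i) \<in> {(s @ [a], s) |s a. s @ [a] \<in> ?T}"
      using wf_iff_no_infinite_down_chain by blast
    define b where "b i = last (f (Suc i))" for i
    have step: "f (Suc i) = f i @ [b i]" "f (Suc i) \<in> ?T" for i
      using f[of i] unfolding b_def by auto
    have branch: "f n = f 0 @ map b [0..<n]" for n
      by (induction n) (simp_all add: step(1))
    have bX: "b i \<in> X" for i
      using step[of i] by (simp add: antichain_seqs_iff)
    have "\<not> le (b i) (b j)" if "i < j" for i j
    proof -
      have "sorted_wrt (incomp le) (map b [0..<Suc j])"
        using step(2)[of j] branch[of "Suc j"] by (simp add: antichain_seqs_iff sorted_wrt_append)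
      then have "incomp le (b i) (b j)"
        using that sorted_wrt_nth_less[of _ "map b [0..<Suc j]" i j] by (simp del: upt_Suc)
      then show ?thesis by (simp add: incomp_def)
    qed
    then show False using assms bX unfolding wqo_on_def by blast
  qed
qed

lemma Well_order_width_ord: "wqo_on le X \<Longrightarrow> Well_order (width_ord le X)"
  unfolding width_ord_eq_rank_order
  by (rule wf_tree.Well_order_rank_order[OF wf_tree_antichain_seqs])

lemma width_ord_less_iff:
  assumes "wqo_on le X" "Well_order W"
  shows "(width_ord le X, W) \<in> ordLess \<longleftrightarrow> (\<exists>\<phi>. decreasing_labelling W (antichain_seqs le X) \<phi>)"
  unfolding width_ord_eq_rank_order
  using wf_tree.rank_order_less_iff[OF wf_tree_antichain_seqs Nil_in_antichain_seqs] assms by blast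

text \<open>A labelling of the larger tree by w(X) itself, restricted to the smaller tree, would give
  w(X) < w(X).\<close>

lemma width_ord_mono:
  assumes "wqo_on le Y" "X \<subseteq> Y"
  shows "(width_ord le X, width_ord le Y) \<in> ordLeq"
proof (rule ccontr)
  have X: "wqo_on le X" using assms wqo_on_subset by blast
  have WX: "Well_order (width_ord le X)" and WY: "Well_order (width_ord le Y)"
    using assms(1) X Well_order_width_ord by blast+
  assume "(width_ord le X, width_ord le Y) \<notin> ordLeq"
  then have "(width_ord le Y, width_ord le X) \<in> ordLess"
    using not_ordLeq_iff_ordLess[OF WY WX] by blast
  then obtain \<phi> where "decreasing_labelling (width_ord le X) (antichain_seqs le Y) \<phi>"
    using width_ord_less_iff[OF assms(1) WX] by blast
  then have "decreasing_labelling (width_ord le X) (antichain_seqs le X) \<phi>"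
    using decreasing_labelling_subset antichain_seqs_mono assms(2) by blast
  then show False using width_ord_less_iff[OF X WX] ordLess_irreflexive by blast
qed

lemma width_ord_ordIso_if_not_less:
  assumes "wqo_on le A" "X \<subseteq> A" "(width_ord le A, W) \<in> ordIso" "(width_ord le X, W) \<notin> ordLess"
  shows "(width_ord le X, width_ord le A) \<in> ordIso"
proof -
  have "Well_order (width_ord le X)" "Well_order W"
    using assms(1-3) Well_order_width_ord wqo_on_subset unfolding ordIso_def by blast+
  then have "(W, width_ord le X) \<in> ordLeq" using assms(4) not_ordLess_iff_ordLeq by blast
  then have "(width_ord le A, width_ord le X) \<in> ordLeq" using assms(3) ordIso_ordLeq_trans by blast
  moreover have "(width_ord le X, width_ord le A) \<in> ordLeq"
    using assms(1,2) width_ord_mono by blast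
  ultimately show ?thesis using ordIso_iff_ordLeq by blast
qed

lemma transferable_if_cone_removal_keeps_width:
  assumes "\<And>F. finite F \<Longrightarrow> F \<subseteq> C \<Longrightarrow>
    (width_ord le {y \<in> C. \<forall>x\<in>F. \<not> le y x}, width_ord le A) \<in> ordIso"
  shows "(width_ord le C, width_ord le A) \<in> ordIso \<and> transferable le C"
proof
  show C_iso: "(width_ord le C, width_ord le A) \<in> ordIso" using assms[of "{}"] by simp
  show "transferable le C"
    unfolding transferable_def
  proof (intro allI impI)
    fix F assume "finite F \<and> F \<subseteq> C"
    then have "(width_ord le {y \<in> C. \<forall>x\<in>F. \<not> le y x}, width_ord le A) \<in> ordIso"
      using assms by blast
    then show "(width_ord le {y \<in> C. \<forall>x\<in>F. \<not> le y x}, width_ord le C) \<in> ordIso"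
      by (rule ordIso_transitive[OF _ ordIso_symmetric[OF C_iso]])
  qed
qed

lemma decreasing_labelling_chain:
  assumes chain: "\<forall>a\<in>K. \<forall>b\<in>K. le a b \<or> le b a" and "(w0, w1) \<in> W" "w0 \<noteq> w1"
  shows "decreasing_labelling W (antichain_seqs le K) (\<lambda>s. if s = [] then w1 else w0)"
proof -
  have "s = []" if "s @ [a] \<in> antichain_seqs le K" for s a
  proof (rule ccontr)
    assume "s \<noteq> []"
    then obtain b s' where "s = b # s'" by (cases s) auto
    then have "incomp le b a" "b \<in> K" "a \<in> K"
      using that by (auto simp: antichain_seqs_iff sorted_wrt_append)
    then show False using chain unfolding incomp_def by blast
  qed
  then show ?thesis
    using assms(2,3) unfolding decreasing_labelling_def by (auto intro: FieldI1 FieldI2)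
qed

section \<open>Natural sums below \<omega>^\<gamma>\<close>

lemma omega_exp_iff:
  "(f, h) \<in> omega_exp g \<longleftrightarrow>
     f \<in> Field (omega_exp g) \<and> h \<in> Field (omega_exp g) \<and>
     (f = h \<or> (\<exists>x. f x < h x \<and> (\<forall>y. f y \<noteq> h y \<longrightarrow> (y, x) \<in> g)))"
  by (auto simp: omega_exp_def Field_def Let_def)

lemma in_Field_omega_exp_iff:
  "f \<in> Field (omega_exp g) \<longleftrightarrow> finite {x. f x \<noteq> 0} \<and> {x. f x \<noteq> 0} \<subseteq> Field g"
  by (auto simp: omega_exp_def Field_def Let_def)

lemma add_in_Field_omega_exp:
  assumes "f \<in> Field (omega_exp g)" "h \<in> Field (omega_exp g)"
  shows "f + h \<in> Field (omega_exp g)"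
proof -
  have "{x. (f + h) x \<noteq> 0} \<subseteq> {x. f x \<noteq> 0} \<union> {x. h x \<noteq> 0}" by auto
  then show ?thesis using assms unfolding in_Field_omega_exp_iff by (auto intro: finite_subset)
qed

lemma omega_exp_add_right_mono:
  assumes "(f', f) \<in> omega_exp g" "h \<in> Field (omega_exp g)"
  shows "(f' + h, f + h) \<in> omega_exp g"
proof -
  have F: "f' + h \<in> Field (omega_exp g)" "f + h \<in> Field (omega_exp g)"
    using assms omega_exp_iff add_in_Field_omega_exp by blast+
  show ?thesis
  proof (cases "f' = f")
    case False
    then obtain x where "f' x < f x" "\<forall>y. f' y \<noteq> f y \<longrightarrow> (y, x) \<in> g"
      using assms(1) omega_exp_iff by blast
    then have "(f' + h) x < (f + h) x" "\<forall>y. (f' + h) y \<noteq> (f + h) y \<longrightarrow> (y, x) \<in> g" by auto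
    then show ?thesis using F omega_exp_iff by blast
  qed (use F omega_exp_iff in blast)
qed

lemma omega_exp_add_left_mono:
  "(f', f) \<in> omega_exp g \<Longrightarrow> h \<in> Field (omega_exp g) \<Longrightarrow> (h + f', h + f) \<in> omega_exp g"
  using omega_exp_add_right_mono by (metis add.commute)

text \<open>Splitting an antichain sequence of Y \<union> Z into its Y-part and its remaining Z-part and
  adding the labels pointwise: the sum of Cantor normal forms is the natural sum, which is
  strictly increasing in each argument.\<close>

lemma decreasing_labelling_omega_exp_Un:
  assumes Y: "decreasing_labelling (omega_exp g) (antichain_seqs le Y) \<phi>"
    and Z: "decreasing_labelling (omega_exp g) (antichain_seqs le Z) \<psi>"
  shows "decreasing_labelling (omega_exp g) (antichain_seqs le (Y \<union> Z))
           (\<lambda>s. \<phi> (filter (\<lambda>a. a \<in> Y) s) + \<psi> (filter (\<lambda>a. a \<notin> Y) s))"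
    (is "decreasing_labelling _ _ ?\<chi>")
proof -
  let ?fY = "filter (\<lambda>a. a \<in> Y)" and ?fZ = "filter (\<lambda>a. a \<notin> Y)"
  have parts: "?fY s \<in> antichain_seqs le Y" "?fZ s \<in> antichain_seqs le Z"
    if "s \<in> antichain_seqs le (Y \<union> Z)" for s
    using that by (auto simp: antichain_seqs_iff sorted_wrt_filter)
  have F: "\<phi> (?fY s) \<in> Field (omega_exp g)" "\<psi> (?fZ s) \<in> Field (omega_exp g)"
    if "s \<in> antichain_seqs le (Y \<union> Z)" for s
    using Y Z parts[OF that] unfolding decreasing_labelling_def by blast+
  have "(?\<chi> (s @ [a]), ?\<chi> s) \<in> omega_exp g \<and> ?\<chi> (s @ [a]) \<noteq> ?\<chi> s"
    if sa: "s @ [a] \<in> antichain_seqs le (Y \<union> Z)" for s a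
  proof -
    have s: "s \<in> antichain_seqs le (Y \<union> Z)" using sa by (rule antichain_seqs_prefix)
    show ?thesis
    proof (cases "a \<in> Y")
      case True
      then have "(\<phi> (?fY s @ [a]), \<phi> (?fY s)) \<in> omega_exp g \<and> \<phi> (?fY s @ [a]) \<noteq> \<phi> (?fY s)"
        using Y parts(1)[OF sa] unfolding decreasing_labelling_def by simp
      then show ?thesis using True by (simp add: omega_exp_add_right_mono F(2)[OF s])
    next
      case False
      then have "(\<psi> (?fZ s @ [a]), \<psi> (?fZ s)) \<in> omega_exp g \<and> \<psi> (?fZ s @ [a]) \<noteq> \<psi> (?fZ s)"
        using Z parts(2)[OF sa] unfolding decreasing_labelling_def by simp
      then show ?thesis using False by (simp add: omega_exp_add_left_mono F(1)[OF s])
    qed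
  qed
  then show ?thesis
    unfolding decreasing_labelling_def using F add_in_Field_omega_exp by blast
qed

section \<open>Ideals of subsets of a wqo\<close>

definition down_closed :: "('a \<Rightarrow> 'a \<Rightarrow> bool) \<Rightarrow> 'a set \<Rightarrow> 'a set \<Rightarrow> bool" where
  "down_closed le A D \<longleftrightarrow> D \<subseteq> A \<and> (\<forall>y\<in>A. \<forall>z\<in>D. le y z \<longrightarrow> y \<in> D)"

lemma wf_down_closed_psubset:
  assumes wqo: "wqo_on le A"
  shows "wf {(D, D'). D \<subset> D' \<and> down_closed le A D \<and> down_closed le A D'}" (is "wf ?R")
proof (rule ccontr)
  assume "\<not> wf ?R"
  then obtain f where "\<And>i. (f (Suc i), f i) \<in> ?R" using wf_iff_no_infinite_down_chain[of ?R] by blast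
  then have psub: "f (Suc i) \<subset> f i" and closed: "down_closed le A (f i)" for i by auto
  have antitone: "f j \<subseteq> f i" if "i \<le> j" for i j
    using that by (induction j rule: dec_induct) (use psub in blast)+
  obtain x where x: "\<And>i. x i \<in> f i \<and> x i \<notin> f (Suc i)"
    using psub choice[of "\<lambda>i y. y \<in> f i \<and> y \<notin> f (Suc i)"] by blast
  have xA: "x i \<in> A" for i using x[of i] closed[of i] unfolding down_closed_def by blast
  obtain i j where ij: "i < j" "le (x i) (x j)" using wqo xA unfolding wqo_on_def by blast
  have "x j \<in> f (Suc i)" using antitone[of "Suc i" j] ij(1) x[of j] by auto
  then have "x i \<in> f (Suc i)" using closed[of "Suc i"] ij(2) xA unfolding down_closed_def by blast
  then show False using x by blast
qed

lemma wqo_on_trans: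
  "wqo_on le A \<Longrightarrow> a \<in> A \<Longrightarrow> b \<in> A \<Longrightarrow> c \<in> A \<Longrightarrow> le a b \<Longrightarrow> le b c \<Longrightarrow> le a c"
  unfolding wqo_on_def by blast

lemma down_closed_below:
  assumes "wqo_on le A" "down_closed le A C" "x \<in> A"
  shows "down_closed le A {y \<in> C. le y x}"
  unfolding down_closed_def
proof (intro conjI ballI impI)
  fix y z assume "y \<in> A" "z \<in> {y \<in> C. le y x}" "le y z"
  then show "y \<in> {y \<in> C. le y x}"
    using assms wqo_on_trans[of le A y z x] unfolding down_closed_def by blast
qed (use assms(2) in \<open>auto simp: down_closed_def\<close>)

lemma down_closed_not_above:
  assumes "wqo_on le A" "down_closed le A C" "x \<in> A"
  shows "down_closed le A {y \<in> C. \<not> le x y}"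
  unfolding down_closed_def
proof (intro conjI ballI impI)
  fix y z assume "y \<in> A" "z \<in> {y \<in> C. \<not> le x y}" "le y z"
  then show "y \<in> {y \<in> C. \<not> le x y}"
    using assms wqo_on_trans[of le A x y z] unfolding down_closed_def by blast
qed (use assms(2) in \<open>auto simp: down_closed_def\<close>)

locale wqo_chain_ideal =
  fixes le :: "'a \<Rightarrow> 'a \<Rightarrow> bool" and A :: "'a set" and small :: "'a set \<Rightarrow> bool"
  assumes wqo: "wqo_on le A"
    and small_subset: "\<And>X Y. X \<subseteq> Y \<Longrightarrow> Y \<subseteq> A \<Longrightarrow> small Y \<Longrightarrow> small X"
    and small_Un: "\<And>X Y. X \<subseteq> A \<Longrightarrow> Y \<subseteq> A \<Longrightarrow> small X \<Longrightarrow> small Y \<Longrightarrow> small (X \<union> Y)"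
    and small_chain: "\<And>K. K \<subseteq> A \<Longrightarrow> \<forall>a\<in>K. \<forall>b\<in>K. le a b \<or> le b a \<Longrightarrow> small K"
begin

lemma small_cone_of_minimal:
  assumes C: "down_closed le A C" "\<not> small C"
    and minimal: "\<And>D. down_closed le A D \<Longrightarrow> D \<subset> C \<Longrightarrow> small D"
    and x: "x \<in> C"
  shows "small {y \<in> C. le y x}"
proof (cases "{y \<in> C. le y x} = C")
  case False
  have "x \<in> A" using C(1) x unfolding down_closed_def by blast
  then show ?thesis using minimal down_closed_below[OF wqo C(1)] False by blast
next
  case True
  then have below: "\<And>y. y \<in> C \<Longrightarrow> le y x" by auto
  have CA: "C \<subseteq> A" using C(1) unfolding down_closed_def by blast
  then have xA: "x \<in> A" using x by blast
  let ?E = "{y \<in> C. \<not> le x y}" and ?K = "{y \<in> C. le x y}"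
  have "x \<notin> ?E" using wqo xA unfolding wqo_on_def by blast
  then have small_E: "small ?E" using minimal down_closed_not_above[OF wqo C(1) xA] x by blast
  have small_K: "small ?K"
  proof (rule small_chain)
    show "\<forall>a\<in>?K. \<forall>b\<in>?K. le a b \<or> le b a"
    proof (intro ballI)
      fix a b assume "a \<in> ?K" "b \<in> ?K"
      then have "a \<in> A" "b \<in> A" "le a x" "le x b" using below CA by auto
      then show "le a b \<or> le b a" using wqo_on_trans[OF wqo] xA by blast
    qed
  qed (use CA in blast)
  have "?E \<subseteq> A" "?K \<subseteq> A" using CA by blast+
  then have "small (?E \<union> ?K)" using small_Un small_E small_K by blast
  moreover have "?E \<union> ?K = C" by blast
  ultimately have "small C" by (simp only:)
  then show ?thesis using C(2) by blast
qed

lemma large_subset_stable_under_cones: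
  assumes "\<not> small A"
  obtains C where "C \<subseteq> A" "\<And>F. finite F \<Longrightarrow> F \<subseteq> C \<Longrightarrow> \<not> small {y \<in> C. \<forall>x\<in>F. \<not> le y x}"
proof -
  let ?large = "{D. down_closed le A D \<and> \<not> small D}"
  have "A \<in> ?large" using assms unfolding down_closed_def by blast
  then obtain C where "C \<in> ?large"
    and "\<And>D. (D, C) \<in> {(D, D'). D \<subset> D' \<and> down_closed le A D \<and> down_closed le A D'} \<Longrightarrow>
      D \<notin> ?large"
    by (rule wfE_min[OF wf_down_closed_psubset[OF wqo]]) blast
  then have C: "down_closed le A C" "\<not> small C"
    and minimal: "\<And>D. down_closed le A D \<Longrightarrow> D \<subset> C \<Longrightarrow> small D"
    by auto
  have CA: "C \<subseteq> A" using C(1) unfolding down_closed_def by blast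
  have cones: "small (\<Union>x\<in>F. {y \<in> C. le y x})" if "finite F" "F \<subseteq> C" for F
    using that
  proof (induction F rule: finite_induct)
    case empty
    show ?case using small_chain by simp
  next
    case (insert x F)
    have "small {y \<in> C. le y x}" using small_cone_of_minimal[OF C minimal] insert.prems by blast
    moreover have "small (\<Union>x\<in>F. {y \<in> C. le y x})" using insert by blast
    moreover have "{y \<in> C. le y x} \<subseteq> A" "(\<Union>x\<in>F. {y \<in> C. le y x}) \<subseteq> A" using CA by blast+
    ultimately show ?case using small_Un by simp
  qed
  have "\<not> small {y \<in> C. \<forall>x\<in>F. \<not> le y x}" if "finite F" "F \<subseteq> C" for F
  proof
    let ?S = "{y \<in> C. \<forall>x\<in>F. \<not> le y x}" and ?U = "\<Union>x\<in>F. {y \<in> C. le y x}"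
    assume "small ?S"
    moreover have "?S \<subseteq> A" "?U \<subseteq> A" using CA by blast+
    ultimately have "small (?S \<union> ?U)" using small_Un cones[OF that] by blast
    moreover have "C \<subseteq> ?S \<union> ?U" "?S \<union> ?U \<subseteq> A" using CA by blast+
    ultimately have "small C" using small_subset by blast
    then show False using C(2) by blast
  qed
  then show thesis using that CA by blast
qed

end

lemma two_points_if_natLeq_ordLeq:
  assumes "(natLeq, W) \<in> ordLeq"
  obtains w0 w1 where "(w0, w1) \<in> W" "w0 \<noteq> w1"
proof -
  obtain g where emb: "embed natLeq W g" using assms unfolding ordLeq_def by blast
  have "(g 0, g 1) \<in> W" using embed_compat[OF emb] unfolding compat_def natLeq_def by simp
  moreover have "g 0 \<noteq> g 1"
    using embed_inj_on[OF natLeq_Well_order emb] unfolding Field_natLeq inj_on_def by auto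
  ultimately show thesis by (rule that)
qed

lemma wqo_chain_ideal_width_less_omega_exp:
  assumes wqo: "wqo_on le A" and W: "Well_order (omega_exp g)"
    and w: "(w0, w1) \<in> omega_exp g" "w0 \<noteq> w1"
  shows "wqo_chain_ideal le A (\<lambda>X. (width_ord le X, omega_exp g) \<in> ordLess)"
proof
  have less_iff: "(width_ord le X, omega_exp g) \<in> ordLess \<longleftrightarrow>
      (\<exists>\<phi>. decreasing_labelling (omega_exp g) (antichain_seqs le X) \<phi>)" if "X \<subseteq> A" for X
    by (rule width_ord_less_iff[OF wqo_on_subset[OF wqo that] W])
  show "(width_ord le X, omega_exp g) \<in> ordLess"
    if "X \<subseteq> Y" "Y \<subseteq> A" "(width_ord le Y, omega_exp g) \<in> ordLess" for X Y
    using ordLeq_ordLess_trans[OF width_ord_mono[OF wqo_on_subset[OF wqo that(2)] that(1)] that(3)] .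
  show "(width_ord le (X \<union> Y), omega_exp g) \<in> ordLess"
    if XY: "X \<subseteq> A" "Y \<subseteq> A" "(width_ord le X, omega_exp g) \<in> ordLess"
      "(width_ord le Y, omega_exp g) \<in> ordLess" for X Y
  proof -
    obtain \<phi> where \<phi>: "decreasing_labelling (omega_exp g) (antichain_seqs le X) \<phi>"
      using less_iff[OF XY(1)] XY(3) by blast
    obtain \<psi> where \<psi>: "decreasing_labelling (omega_exp g) (antichain_seqs le Y) \<psi>"
      using less_iff[OF XY(2)] XY(4) by blast
    have "X \<union> Y \<subseteq> A" using XY(1,2) by blast
    then show ?thesis
      unfolding less_iff[OF \<open>X \<union> Y \<subseteq> A\<close>] using decreasing_labelling_omega_exp_Un[OF \<phi> \<psi>] by blast
  qed
  show "(width_ord le K, omega_exp g) \<in> ordLess"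
    if "K \<subseteq> A" "\<forall>a\<in>K. \<forall>b\<in>K. le a b \<or> le b a" for K
    unfolding less_iff[OF that(1)] using decreasing_labelling_chain[OF that(2) w] by blast
qed (rule wqo)

theorem mainTheorem8:
  fixes le :: "'a \<Rightarrow> 'a \<Rightarrow> bool" and A :: "'a set"
  assumes "wqo_on le A"
    and "(natLeq, width_ord le A) \<in> ordLeq"
    and "add_indecomposable (width_ord le A)"
  shows "\<exists>C \<subseteq> A. (width_ord le C, width_ord le A) \<in> ordIso \<and> transferable le C"
proof -
  obtain \<gamma> :: "'a list set rel" where iso: "(width_ord le A, omega_exp \<gamma>) \<in> ordIso"
    using assms(3) unfolding add_indecomposable_def by blast
  then have W: "Well_order (omega_exp \<gamma>)" unfolding ordIso_def by blast
  obtain w0 w1 where w: "(w0, w1) \<in> omega_exp \<gamma>" "w0 \<noteq> w1"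
    using two_points_if_natLeq_ordLeq ordLeq_ordIso_trans[OF assms(2) iso] by blast
  define small where "small X \<longleftrightarrow> (width_ord le X, omega_exp \<gamma>) \<in> ordLess" for X
  have ideal: "wqo_chain_ideal le A small"
    unfolding small_def using wqo_chain_ideal_width_less_omega_exp[OF assms(1) W w] .
  have "\<not> small A" unfolding small_def using iso not_ordLess_ordIso by blast
  then obtain C where C: "C \<subseteq> A"
    and stable: "\<And>F. finite F \<Longrightarrow> F \<subseteq> C \<Longrightarrow> \<not> small {y \<in> C. \<forall>x\<in>F. \<not> le y x}"
    using wqo_chain_ideal.large_subset_stable_under_cones[OF ideal] by blast
  have "(width_ord le {y \<in> C. \<forall>x\<in>F. \<not> le y x}, width_ord le A) \<in> ordIso"
    if "finite F" "F \<subseteq> C" for F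
  proof (rule width_ord_ordIso_if_not_less[OF assms(1) _ iso])
    show "{y \<in> C. \<forall>x\<in>F. \<not> le y x} \<subseteq> A" using C by blast
    show "(width_ord le {y \<in> C. \<forall>x\<in>F. \<not> le y x}, omega_exp \<gamma>) \<notin> ordLess"
      using stable[OF that] unfolding small_def .
  qed
  then have "(width_ord le C, width_ord le A) \<in> ordIso \<and> transferable le C"
    by (rule transferable_if_cone_removal_keeps_width)
  with C show ?thesis by blast
qed

end
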